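(* Let $(x_n)$ be a bounded sequence in a Banach space $X$ with $c_J(x_n)>0$. Then there is a block sequence $(z_l)$ of $(x_n)$ such that $\|z_l\|\to c_J(x_n)$ as $l\to\infty$ and $$(1-2^{-m})\,c_J(x_n)\sum_{l=m}^\infty|\alpha_l|\le\Big\|\sum_{l=m}^\infty\alpha_l z_l\Big\|\le(1+2^{-m})\,c_J(x_n)\sum_{l=m}^\infty|\alpha_l|$$ for all $m\in\mathbb N$ and all $(\alpha_l)\in\ell^1$.
   Context: For a bounded sequence $(x_n)$ in a Banach space, define $c_m=\inf\{\|\sum_{n\ge m}\alpha_n x_n\|: \sum_{n\ge m}|\alpha_n|=1\}$. This is an increasing sequence in $m$; put $c_J(x_n)=\sup_m c_m$. A sequence $(z_l)$ is a block sequence of $(x_n)$ if there are finite sets $A_l\subset\mathbb N$ with $\max A_l<\min A_{l+1}$ and scalars $(\lambda_k)$ such that, for every $l$, $\sum_{k\in A_l}|\lambda_k|=1$ and $z_l=\sum_{k\in A_l}\lambda_k x_k$. *)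

theory Defs
  imports "HOL-Analysis.Analysis"
begin

definition cseq :: "(nat \<Rightarrow> 'a::banach) \<Rightarrow> nat \<Rightarrow> real" where
  "cseq x m = Inf {norm (\<Sum>n. a n *\<^sub>R x n) | a.
       (\<forall>n<m. a n = 0) \<and> summable (\<lambda>n. \<bar>a n\<bar>) \<and> (\<Sum>n. \<bar>a n\<bar>) = 1}"

definition cJ :: "(nat \<Rightarrow> 'a::banach) \<Rightarrow> real" where
  "cJ x = (SUP m. cseq x m)"

definition block_seq :: "(nat \<Rightarrow> 'a::banach) \<Rightarrow> (nat \<Rightarrow> 'a) \<Rightarrow> bool" where
  "block_seq z x \<longleftrightarrow> (\<exists>(A :: nat \<Rightarrow> nat set) (lam :: nat \<Rightarrow> real).
      (\<forall>l. finite (A l) \<and> A l \<noteq> {}) \<and>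
      (\<forall>l. Max (A l) < Min (A (Suc l))) \<and>
      (\<forall>l. (\<Sum>k\<in>A l. \<bar>lam k\<bar>) = 1) \<and>
      (\<forall>l. z l = (\<Sum>k\<in>A l. lam k *\<^sub>R x k)))"

end

theory Submission
  imports Defs
begin

text \<open>Since the c_m increase to c = c_J, one can choose p_0 < p_1 < ... with
  c_{p_l} > (1 - 2^-(l+1)) c, and, truncating an almost minimising normalised combination of
  the x_k with k \<ge> p_l, a normalised block z_l supported in [p_l, p_{l+1}) with
  norm (z_l) < (1 + 2^-(l+1)) c. A normalised combination of z_m, z_{m+1}, ... is a normalised
  combination of x_k with k \<ge> p_m, hence has norm at least c_{p_m}; the upper estimate is
  the triangle inequality.\<close>

definition unit_tail_coeffs :: "nat \<Rightarrow> (nat \<Rightarrow> real) set" where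
  "unit_tail_coeffs m =
     {a. (\<forall>n<m. a n = 0) \<and> summable (\<lambda>n. \<bar>a n\<bar>) \<and> (\<Sum>n. \<bar>a n\<bar>) = 1}"

lemma cseq_eq_INF: "cseq x m = (INF a\<in>unit_tail_coeffs m. norm (\<Sum>n. a n *\<^sub>R x n))"
  unfolding cseq_def unit_tail_coeffs_def setcompr_eq_image ..

lemma unit_tail_coeffs_nonempty: "unit_tail_coeffs m \<noteq> {}"
proof -
  have "(\<lambda>n. \<bar>if n = m then 1 else 0\<bar>) sums (1::real)"
    using sums_single[of m "\<lambda>_. 1::real"] by (simp add: if_distrib cong: if_cong)
  then have "(\<lambda>n. if n = m then 1 else 0) \<in> unit_tail_coeffs m"
    by (auto simp: unit_tail_coeffs_def sums_iff)
  then show ?thesis by blast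
qed

lemma bdd_below_norm_image: "bdd_below ((\<lambda>a. norm (f a)) ` A)"
  by (rule bdd_belowI[of _ 0]) auto

lemma cseq_mono:
  assumes "m \<le> m'"
  shows "cseq x m \<le> cseq x m'"
  unfolding cseq_eq_INF
  by (rule cINF_superset_mono[OF unit_tail_coeffs_nonempty bdd_below_norm_image])
     (use assms in \<open>auto simp: unit_tail_coeffs_def\<close>)

lemma cseq_mult_sum_le_norm:
  assumes "finite F" and "\<And>k. k \<in> F \<Longrightarrow> N \<le> k"
  shows "cseq x N * (\<Sum>k\<in>F. \<bar>b k\<bar>) \<le> norm (\<Sum>k\<in>F. b k *\<^sub>R x k)"
proof (cases "(\<Sum>k\<in>F. \<bar>b k\<bar>) = 0")
  case False
  define S where "S = (\<Sum>k\<in>F. \<bar>b k\<bar>)"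
  have "S > 0" using False by (simp add: S_def order_less_le sum_nonneg)
  define a where "a k = (if k \<in> F then b k / S else 0)" for k
  have abs_sums: "(\<lambda>n. \<bar>a n\<bar>) sums (\<Sum>n\<in>F. \<bar>a n\<bar>)"
    and sums: "(\<lambda>n. a n *\<^sub>R x n) sums (\<Sum>n\<in>F. a n *\<^sub>R x n)"
    by (rule sums_finite; use assms in \<open>simp add: a_def\<close>)+
  have "(\<Sum>n\<in>F. \<bar>a n\<bar>) = 1"
    using \<open>S > 0\<close> by (simp add: a_def abs_divide sum_divide_distrib[symmetric] S_def)
  then have "a \<in> unit_tail_coeffs N"
    using abs_sums assms(2) by (fastforce simp: unit_tail_coeffs_def a_def sums_iff)
  then have "cseq x N \<le> norm (\<Sum>n. a n *\<^sub>R x n)"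
    unfolding cseq_eq_INF by (rule cINF_lower[OF bdd_below_norm_image])
  also have "\<dots> = norm ((1 / S) *\<^sub>R (\<Sum>k\<in>F. b k *\<^sub>R x k))"
    using sums by (simp add: sums_iff a_def scaleR_sum_right)
  also have "\<dots> = norm (\<Sum>k\<in>F. b k *\<^sub>R x k) / S"
    using \<open>S > 0\<close> by simp
  finally show ?thesis using \<open>S > 0\<close> by (simp add: S_def field_simps)
qed simp

lemma cseq_mult_sum_le_norm_reindex:
  assumes "finite S" and "inj_on i S" and "\<And>q. q \<in> S \<Longrightarrow> N \<le> i q"
  shows "cseq x N * (\<Sum>q\<in>S. \<bar>b q\<bar>) \<le> norm (\<Sum>q\<in>S. b q *\<^sub>R x (i q))"
proof -
  define b' where "b' = b \<circ> the_inv_into S i"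
  have "b' (i q) = b q" if "q \<in> S" for q
    using the_inv_into_f_f[OF assms(2) that] by (simp add: b'_def)
  then have "(\<Sum>q\<in>S. \<bar>b q\<bar>) = (\<Sum>k\<in>i ` S. \<bar>b' k\<bar>)"
    and "(\<Sum>q\<in>S. b q *\<^sub>R x (i q)) = (\<Sum>k\<in>i ` S. b' k *\<^sub>R x k)"
    by (simp_all add: sum.reindex[OF assms(2)])
  moreover have "cseq x N * (\<Sum>k\<in>i ` S. \<bar>b' k\<bar>) \<le> norm (\<Sum>k\<in>i ` S. b' k *\<^sub>R x k)"
    using assms by (intro cseq_mult_sum_le_norm) auto
  ultimately show ?thesis by simp
qed

lemma cseq_le_norm: "cseq x m \<le> norm (x m)"
  using cseq_mult_sum_le_norm[of "{m}" m x "\<lambda>_. 1"] by simp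

lemma bdd_above_cseq:
  assumes "bounded (range x)"
  shows "bdd_above (range (cseq x))"
proof -
  obtain B where "\<And>n. norm (x n) \<le> B" using assms by (auto simp: bounded_iff)
  then show ?thesis by (intro bdd_aboveI[of _ B]) (auto intro: order_trans[OF cseq_le_norm])
qed

lemma cseq_le_cJ:
  assumes "bounded (range x)"
  shows "cseq x m \<le> cJ x"
  unfolding cJ_def by (rule cSUP_upper[OF _ bdd_above_cseq[OF assms]]) simp

lemma less_cJ_imp_less_cseq:
  assumes "bounded (range x)" and "r < cJ x"
  shows "\<exists>N. r < cseq x N"
  using assms less_cSUP_iff[OF _ bdd_above_cseq[OF assms(1)]] by (auto simp: cJ_def)

lemma summable_scaleR_bounded:
  fixes z :: "nat \<Rightarrow> 'a::banach"
  assumes "summable (\<lambda>n. \<bar>a n\<bar>)" and "\<And>n. norm (z n) \<le> M"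
  shows "summable (\<lambda>n. a n *\<^sub>R z n)"
proof (rule summable_comparison_test)
  show "\<exists>N. \<forall>n\<ge>N. norm (a n *\<^sub>R z n) \<le> \<bar>a n\<bar> * M"
    using assms(2) by (auto intro!: mult_left_mono)
  show "summable (\<lambda>n. \<bar>a n\<bar> * M)" using assms(1) by (rule summable_mult2)
qed

lemma norm_suminf_scaleR_le:
  fixes z :: "nat \<Rightarrow> 'a::banach"
  assumes "summable (\<lambda>n. \<bar>a n\<bar>)" and "\<And>n. norm (z n) \<le> M"
  shows "norm (\<Sum>n. a n *\<^sub>R z n) \<le> M * (\<Sum>n. \<bar>a n\<bar>)"
proof -
  have "norm (\<Sum>n. a n *\<^sub>R z n) \<le> (\<Sum>n. \<bar>a n\<bar> * M)"
    using assms by (intro norm_suminf_le summable_mult2) (auto intro: mult_left_mono)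
  also have "\<dots> = M * (\<Sum>n. \<bar>a n\<bar>)"
    using suminf_mult2[OF assms(1)] by (simp add: mult.commute)
  finally show ?thesis .
qed

text \<open>Truncate an almost minimising element of the infimum defining c_N and renormalise.\<close>

lemma finite_combination_norm_less:
  fixes x :: "nat \<Rightarrow> 'a::banach"
  assumes "bounded (range x)" and "cseq x N < r"
  shows "\<exists>t L. N < t \<and> K \<le> t \<and> (\<Sum>k\<in>{N..<t}. \<bar>L k\<bar>) = 1 \<and>
           norm (\<Sum>k\<in>{N..<t}. L k *\<^sub>R x k) < r"
proof -
  obtain a where a: "a \<in> unit_tail_coeffs N" and ar: "norm (\<Sum>n. a n *\<^sub>R x n) < r"
    using assms(2) unfolding cseq_eq_INF
    by (auto simp: cINF_less_iff[OF unit_tail_coeffs_nonempty bdd_below_norm_image])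
  then have a0: "\<And>n. n < N \<Longrightarrow> a n = 0" and sa: "summable (\<lambda>n. \<bar>a n\<bar>)"
    and a1: "(\<Sum>n. \<bar>a n\<bar>) = 1"
    by (auto simp: unit_tail_coeffs_def)
  obtain B where "\<And>n. norm (x n) \<le> B" using assms(1) by (auto simp: bounded_iff)
  then have sx: "summable (\<lambda>n. a n *\<^sub>R x n)" using sa by (rule summable_scaleR_bounded[rotated])
  define P where "P M = (\<Sum>k<M. a k *\<^sub>R x k)" for M
  define T where "T M = (\<Sum>k<M. \<bar>a k\<bar>)" for M
  have tT: "T \<longlonglongrightarrow> 1" unfolding T_def using sa a1 summable_LIMSEQ by fastforce
  have "(\<lambda>M. norm (P M) / T M) \<longlonglongrightarrow> norm (\<Sum>n. a n *\<^sub>R x n) / 1"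
    unfolding P_def by (intro tendsto_divide tendsto_norm summable_LIMSEQ sx tT) auto
  then have "eventually (\<lambda>M. norm (P M) / T M < r) sequentially"
    using ar by (auto dest: order_tendstoD)
  moreover have "eventually (\<lambda>M. T M > 0) sequentially"
    using order_tendstoD(1)[OF tT, of 0] by simp
  ultimately have "eventually (\<lambda>M. norm (P M) / T M < r \<and> T M > 0 \<and> Suc N \<le> M \<and> K \<le> M)
      sequentially"
    using eventually_ge_at_top[of "Suc N"] eventually_ge_at_top[of K] by eventually_elim auto
  then obtain M where M: "norm (P M) / T M < r" "T M > 0" "Suc N \<le> M" "K \<le> M"
    unfolding eventually_sequentially by blast
  have tail: "(\<Sum>k<M. f k) = (\<Sum>k\<in>{N..<M}. f k)" if "\<And>k. k < N \<Longrightarrow> f k = 0"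
    for f :: "nat \<Rightarrow> 'b::comm_monoid_add"
    by (rule sum.mono_neutral_right) (use that in auto)
  define L where "L k = a k / T M" for k
  have "(\<Sum>k\<in>{N..<M}. \<bar>L k\<bar>) = T M / T M"
    using tail[of "\<lambda>k. \<bar>a k\<bar>"] a0 M(2)
    by (simp add: L_def T_def abs_divide sum_divide_distrib[symmetric])
  moreover have "(\<Sum>k\<in>{N..<M}. L k *\<^sub>R x k) = (1 / T M) *\<^sub>R P M"
    using tail[of "\<lambda>k. a k *\<^sub>R x k"] a0 by (simp add: L_def P_def scaleR_sum_right)
  ultimately show ?thesis
    using M by (intro exI[of _ M] exI[of _ L]) simp
qed

definition normalized_blocks :: "(nat \<Rightarrow> nat) \<Rightarrow> (nat \<Rightarrow> nat \<Rightarrow> real) \<Rightarrow> bool" where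
  "normalized_blocks p L \<longleftrightarrow>
     strict_mono p \<and> (\<forall>l. (\<Sum>k\<in>{p l..<p (Suc l)}. \<bar>L l k\<bar>) = 1)"

definition block_sum ::
    "(nat \<Rightarrow> 'a::real_vector) \<Rightarrow> (nat \<Rightarrow> nat) \<Rightarrow> (nat \<Rightarrow> nat \<Rightarrow> real) \<Rightarrow> nat \<Rightarrow> 'a" where
  "block_sum x p L l = (\<Sum>k\<in>{p l..<p (Suc l)}. L l k *\<^sub>R x k)"

lemma strict_mono_blocks_disjoint:
  assumes "strict_mono p" and "k \<in> {p l..<p (Suc l)}" and "k \<in> {p l'..<p (Suc l')}"
  shows "l = l'"
proof (rule ccontr)
  assume "l \<noteq> l'"
  then consider "Suc l \<le> l'" | "Suc l' \<le> l" by linarith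
  then show False
  proof cases
    case 1
    then have "p (Suc l) \<le> p l'" using strict_mono_less_eq[OF assms(1)] by blast
    then show False using assms(2,3) by fastforce
  next
    case 2
    then have "p (Suc l') \<le> p l" using strict_mono_less_eq[OF assms(1)] by blast
    then show False using assms(2,3) by fastforce
  qed
qed

lemma block_seq_block_sum:
  assumes "normalized_blocks p L"
  shows "block_seq (block_sum x p L) x"
proof -
  have p: "strict_mono p" and L1: "\<And>l. (\<Sum>k\<in>{p l..<p (Suc l)}. \<bar>L l k\<bar>) = 1"
    using assms by (auto simp: normalized_blocks_def)
  define A where "A l = {p l..<p (Suc l)}" for l
  define block where "block k = (LEAST l. k \<in> A l)" for k
  define lam where "lam k = L (block k) k" for k
  have block_eq: "block k = l" if "k \<in> A l" for k l
    using that strict_mono_blocks_disjoint[OF p] unfolding block_def A_def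
    by (intro Least_equality) auto
  have lam_eq: "(\<Sum>k\<in>A l. f (lam k) k) = (\<Sum>k\<in>A l. f (L l k) k)"
    for f :: "real \<Rightarrow> nat \<Rightarrow> 'b::comm_monoid_add" and l
    by (rule sum.cong) (simp_all add: lam_def block_eq)
  have "Max (A l) < Min (A (Suc l))" for l
  proof -
    have "Max (A l) = p (Suc l) - 1" and "Min (A (Suc l)) = p (Suc l)"
      using strict_monoD[OF p, of l "Suc l"] strict_monoD[OF p, of "Suc l" "Suc (Suc l)"]
      unfolding A_def by (auto intro!: Max_eqI Min_eqI)
    then show ?thesis using strict_monoD[OF p, of l "Suc l"] by simp
  qed
  moreover have "finite (A l) \<and> A l \<noteq> {}" for l
    using strict_monoD[OF p, of l "Suc l"] by (simp add: A_def)
  moreover have "(\<Sum>k\<in>A l. \<bar>lam k\<bar>) = 1" for l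
    using lam_eq[of "\<lambda>c k. \<bar>c\<bar>" l] L1 by (simp add: A_def)
  moreover have "block_sum x p L l = (\<Sum>k\<in>A l. lam k *\<^sub>R x k)" for l
    using lam_eq[of "\<lambda>c k. c *\<^sub>R x k" l] by (simp add: A_def block_sum_def)
  ultimately show ?thesis
    unfolding block_seq_def by (intro exI[of _ A] exI[of _ lam]) blast
qed

lemma norm_block_sum_le:
  assumes "normalized_blocks p L" and "\<And>n. norm (x n) \<le> B"
  shows "norm (block_sum x p L l) \<le> B"
proof -
  have "norm (block_sum x p L l) \<le> (\<Sum>k\<in>{p l..<p (Suc l)}. \<bar>L l k\<bar> * B)"
    unfolding block_sum_def
    by (rule order_trans[OF norm_sum sum_mono]) (simp add: assms(2) mult_left_mono)
  also have "\<dots> = B"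
    using assms(1) by (simp add: normalized_blocks_def sum_distrib_right[symmetric])
  finally show ?thesis .
qed

text \<open>A combination of blocks is a combination of the x_k, indexed by pairs (block, k).\<close>

lemma cseq_mult_sum_le_norm_block_sum:
  assumes "normalized_blocks p L"
  shows "cseq x (p m) * (\<Sum>l<n. \<bar>a (l + m)\<bar>) \<le> norm (\<Sum>l<n. a (l + m) *\<^sub>R block_sum x p L (l + m))"
proof -
  have p: "strict_mono p" and L1: "\<And>l. (\<Sum>k\<in>{p l..<p (Suc l)}. \<bar>L l k\<bar>) = 1"
    using assms by (auto simp: normalized_blocks_def)
  define S where "S = Sigma {..<n} (\<lambda>l. {p (l + m)..<p (Suc (l + m))})"
  define b where "b = (\<lambda>(l, k). a (l + m) * L (l + m) k)"
  have "inj_on snd S"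
    using strict_mono_blocks_disjoint[OF p] by (fastforce simp: S_def inj_on_def)
  moreover have "p m \<le> snd q" if "q \<in> S" for q
  proof -
    have "p m \<le> p (fst q + m)" using strict_mono_less_eq[OF p] by simp
    then show ?thesis using that by (auto simp: S_def)
  qed
  ultimately have "cseq x (p m) * (\<Sum>q\<in>S. \<bar>b q\<bar>) \<le> norm (\<Sum>q\<in>S. b q *\<^sub>R x (snd q))"
    by (intro cseq_mult_sum_le_norm_reindex) (auto simp: S_def)
  moreover have "(\<Sum>q\<in>S. \<bar>b q\<bar>) =
      (\<Sum>l<n. \<bar>a (l + m)\<bar> * (\<Sum>k\<in>{p (l + m)..<p (Suc (l + m))}. \<bar>L (l + m) k\<bar>))"
    by (simp add: S_def b_def sum.Sigma split_def abs_mult sum_distrib_left)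
  moreover have "(\<Sum>q\<in>S. b q *\<^sub>R x (snd q)) = (\<Sum>l<n. a (l + m) *\<^sub>R block_sum x p L (l + m))"
    by (simp add: S_def b_def sum.Sigma split_def block_sum_def scaleR_sum_right)
  ultimately show ?thesis by (simp add: L1)
qed

lemma cseq_mult_suminf_le_norm_block_sum:
  fixes x :: "nat \<Rightarrow> 'a::banach"
  assumes "normalized_blocks p L" and "bounded (range x)" and "summable (\<lambda>l. \<bar>a l\<bar>)"
  shows "cseq x (p m) * (\<Sum>l. \<bar>a (l + m)\<bar>) \<le> norm (\<Sum>l. a (l + m) *\<^sub>R block_sum x p L (l + m))"
proof (rule LIMSEQ_le)
  have sa: "summable (\<lambda>l. \<bar>a (l + m)\<bar>)"
    using assms(3) by (rule summable_ignore_initial_segment)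
  obtain B where "\<And>n. norm (x n) \<le> B" using assms(2) by (auto simp: bounded_iff)
  then have "summable (\<lambda>l. a (l + m) *\<^sub>R block_sum x p L (l + m))"
    using sa by (intro summable_scaleR_bounded norm_block_sum_le[OF assms(1)])
  then show "(\<lambda>n. norm (\<Sum>l<n. a (l + m) *\<^sub>R block_sum x p L (l + m)))
      \<longlonglongrightarrow> norm (\<Sum>l. a (l + m) *\<^sub>R block_sum x p L (l + m))"
    by (intro tendsto_norm summable_LIMSEQ)
  show "(\<lambda>n. cseq x (p m) * (\<Sum>l<n. \<bar>a (l + m)\<bar>)) \<longlonglongrightarrow> cseq x (p m) * (\<Sum>l. \<bar>a (l + m)\<bar>)"
    using sa by (intro tendsto_mult tendsto_const summable_LIMSEQ)
qed (use cseq_mult_sum_le_norm_block_sum[OF assms(1)] in blast)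

lemma exists_norming_blocks:
  fixes x :: "nat \<Rightarrow> 'a::banach"
  assumes "bounded (range x)" and "\<And>l. lo l < cJ x" and "\<And>l. cJ x < hi l"
  shows "\<exists>p L. normalized_blocks p L \<and> (\<forall>l. lo l < cseq x (p l)) \<and>
           (\<forall>l. norm (block_sum x p L l) < hi l)"
proof -
  have "\<forall>l. \<exists>n. lo l < cseq x n"
    using less_cJ_imp_less_cseq[OF assms(1,2)] by blast
  then have "\<exists>N. \<forall>l. lo l < cseq x (N l)" by (rule choice)
  then obtain N where N: "\<And>l. lo l < cseq x (N l)" by blast
  define good_block where "good_block l s t \<longleftrightarrow> s < t \<and>
      (\<exists>Lb. (\<Sum>k\<in>{s..<t}. \<bar>Lb k\<bar>) = 1 \<and> norm (\<Sum>k\<in>{s..<t}. Lb k *\<^sub>R x k) < hi l)" for l s t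
  have "\<exists>t. lo (Suc l) < cseq x t \<and> good_block l s t" for l s
  proof -
    have "cseq x s < hi l"
      using cseq_le_cJ[OF assms(1), of s] assms(3)[of l] by linarith
    then obtain t Lb where "s < t" "N (Suc l) \<le> t" "(\<Sum>k\<in>{s..<t}. \<bar>Lb k\<bar>) = 1"
        "norm (\<Sum>k\<in>{s..<t}. Lb k *\<^sub>R x k) < hi l"
      using finite_combination_norm_less[OF assms(1), of s _ "N (Suc l)"] by blast
    moreover have "lo (Suc l) < cseq x t"
      using N[of "Suc l"] cseq_mono[OF \<open>N (Suc l) \<le> t\<close>, of x] by linarith
    ultimately show ?thesis unfolding good_block_def by blast
  qed
  then obtain p where p: "\<And>l. lo l < cseq x (p l)" and "\<And>l. good_block l (p l) (p (Suc l))"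
    using dependent_nat_choice[of "\<lambda>l s. lo l < cseq x s" good_block] N by blast
  then have p_less: "p l < p (Suc l)"
    and "\<exists>Lb. (\<Sum>k\<in>{p l..<p (Suc l)}. \<bar>Lb k\<bar>) = 1 \<and>
          norm (\<Sum>k\<in>{p l..<p (Suc l)}. Lb k *\<^sub>R x k) < hi l" for l
    by (auto simp: good_block_def)
  then have "\<exists>L. \<forall>l. (\<Sum>k\<in>{p l..<p (Suc l)}. \<bar>L l k\<bar>) = 1 \<and>
      norm (\<Sum>k\<in>{p l..<p (Suc l)}. L l k *\<^sub>R x k) < hi l"
    by (intro choice allI)
  then obtain L where "\<And>l. (\<Sum>k\<in>{p l..<p (Suc l)}. \<bar>L l k\<bar>) = 1"
    and "\<And>l. norm (block_sum x p L l) < hi l"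
    unfolding block_sum_def by blast
  with p p_less show ?thesis
    by (auto simp: normalized_blocks_def strict_mono_Suc_iff)
qed

lemma two_powi_minus_Suc: "(2::real) powi (- int (m + 1)) = (1 / 2) ^ Suc m"
proof -
  have "(2::real) powi (- int (m + 1)) = inverse (2 powi int (m + 1))"
    by (rule power_int_minus)
  also have "(2::real) powi int (m + 1) = 2 ^ (m + 1)"
    by (rule power_int_of_nat)
  finally show ?thesis by (simp only: power_one_over inverse_eq_divide Suc_eq_plus1)
qed

lemma norm_block_sum_ge_cseq:
  assumes "normalized_blocks p L"
  shows "cseq x (p l) \<le> norm (block_sum x p L l)"
  using cseq_mult_sum_le_norm_block_sum[OF assms, where x = x and m = l and n = 1 and a = "\<lambda>_. 1"]
  by simp

lemma block_sum_tail_bounds: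
  fixes x :: "nat \<Rightarrow> 'a::banach"
  assumes blocks: "normalized_blocks p L" and "bounded (range x)" and a: "summable (\<lambda>l. \<bar>a l\<bar>)"
    and lower: "lo \<le> cseq x (p m)" and upper: "\<And>l. m \<le> l \<Longrightarrow> norm (block_sum x p L l) \<le> hi"
  shows "lo * (\<Sum>l. \<bar>a (l + m)\<bar>) \<le> norm (\<Sum>l. a (l + m) *\<^sub>R block_sum x p L (l + m))"
    and "norm (\<Sum>l. a (l + m) *\<^sub>R block_sum x p L (l + m)) \<le> hi * (\<Sum>l. \<bar>a (l + m)\<bar>)"
proof -
  have tail: "summable (\<lambda>l. \<bar>a (l + m)\<bar>)"
    using a by (rule summable_ignore_initial_segment)
  have "lo * (\<Sum>l. \<bar>a (l + m)\<bar>) \<le> cseq x (p m) * (\<Sum>l. \<bar>a (l + m)\<bar>)"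
    using lower tail by (intro mult_right_mono suminf_nonneg) auto
  also have "\<dots> \<le> norm (\<Sum>l. a (l + m) *\<^sub>R block_sum x p L (l + m))"
    by (rule cseq_mult_suminf_le_norm_block_sum[OF blocks assms(2) a])
  finally show "lo * (\<Sum>l. \<bar>a (l + m)\<bar>) \<le> norm (\<Sum>l. a (l + m) *\<^sub>R block_sum x p L (l + m))" .
  show "norm (\<Sum>l. a (l + m) *\<^sub>R block_sum x p L (l + m)) \<le> hi * (\<Sum>l. \<bar>a (l + m)\<bar>)"
    using upper by (intro norm_suminf_scaleR_le[OF tail]) simp
qed

theorem lemma5p2:
  fixes x :: "nat \<Rightarrow> 'a::banach"
  assumes "bounded (range x)" and "cJ x > 0"
  shows "\<exists>z. block_seq z x \<and> (\<lambda>l. norm (z l)) \<longlonglongrightarrow> cJ x \<and>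
    (\<forall>m (a :: nat \<Rightarrow> real). summable (\<lambda>l. \<bar>a l\<bar>) \<longrightarrow>
       (1 - 2 powi (- int (m + 1))) * cJ x * (\<Sum>l. \<bar>a (l + m)\<bar>)
         \<le> norm (\<Sum>l. a (l + m) *\<^sub>R z (l + m)) \<and>
       norm (\<Sum>l. a (l + m) *\<^sub>R z (l + m))
         \<le> (1 + 2 powi (- int (m + 1))) * cJ x * (\<Sum>l. \<bar>a (l + m)\<bar>))"
proof -
  define c where "c = cJ x"
  define e :: "nat \<Rightarrow> real" where "e l = (1 / 2) ^ Suc l" for l
  obtain p L where blocks: "normalized_blocks p L"
    and lower: "\<And>l. (1 - e l) * c < cseq x (p l)"
    and upper: "\<And>l. norm (block_sum x p L l) < (1 + e l) * c"
    using exists_norming_blocks[OF assms(1), of "\<lambda>l. (1 - e l) * c" "\<lambda>l. (1 + e l) * c"] assms(2)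
    by (auto simp: c_def e_def)
  have upper_tail: "norm (block_sum x p L l) \<le> (1 + e m) * c" if "m \<le> l" for l m
  proof -
    have "e l \<le> e m" unfolding e_def using that by (simp add: power_decreasing)
    then have "(1 + e l) * c \<le> (1 + e m) * c" using assms(2) by (simp add: c_def)
    then show ?thesis using upper[of l] by linarith
  qed
  have "(\<lambda>l. norm (block_sum x p L l)) \<longlonglongrightarrow> c"
  proof (rule tendsto_sandwich)
    show "\<forall>\<^sub>F l in sequentially. (1 - e l) * c \<le> norm (block_sum x p L l)"
      using lower norm_block_sum_ge_cseq[OF blocks, of x]
      by (intro always_eventually allI) (meson less_imp_le order_trans)
    show "\<forall>\<^sub>F l in sequentially. norm (block_sum x p L l) \<le> (1 + e l) * c"
      using upper by (simp add: less_imp_le)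
    have "e \<longlonglongrightarrow> 0"
      unfolding e_def by (rule LIMSEQ_power_zero[THEN LIMSEQ_Suc]) simp
    then show "(\<lambda>l. (1 - e l) * c) \<longlonglongrightarrow> c" and "(\<lambda>l. (1 + e l) * c) \<longlonglongrightarrow> c"
      by (auto intro!: tendsto_eq_intros)
  qed
  then show ?thesis
    unfolding two_powi_minus_Suc e_def[symmetric] c_def[symmetric]
    using block_seq_block_sum[OF blocks, of x] block_sum_tail_bounds[OF blocks assms(1)]
      less_imp_le[OF lower] upper_tail by blast
qed

end
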